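(* Let $\mathcal{O}$ be a homogeneous and finitely generated operad. In the prefix poset of $\mathcal{O}$, for all $x,y\in\mathcal{O}$, $x\preceq y$ if and only if $x$ is a prefix of $y$, i.e. there exist $z_1,\dots,z_{|x|}\in\mathcal{O}$ with $y=x\circ[z_1,\dots,z_{|x|}]$. Moreover, $y$ covers $x$ if and only if there exist $\mathtt{a}\in\mathfrak{G}_\mathcal{O}$ and $i\in[|x|]$ such that $y=x\circ_i\mathtt{a}$.
   Context: Operads are nonsymmetric set-operads: graded sets $\mathcal{O}=\bigsqcup_n\mathcal{O}(n)$ (arity $|x|=n$ for $x\in\mathcal{O}(n)$) with partial compositions $\circ_i:\mathcal{O}(n)\times\mathcal{O}(m)\to\mathcal{O}(n+m-1)$, $i\in[n]$, and unit $\mathbf{1}\in\mathcal{O}(1)$, satisfying the usual associativity, commutativity and unit axioms. The full composition is $x\circ[z_1,\dots,z_n]=(\cdots((x\circ_n z_n)\circ_{n-1}z_{n-1})\cdots)\circ_1 z_1$ for $x\in\mathcal{O}(n)$. If $\mathcal{O}(0)=\emptyset$ and $\mathcal{O}(1)=\{\mathbf{1}\}$, $\mathcal{O}$ has a unique minimal generating set $\mathfrak{G}_\mathcal{O}$. A treelike expression of $x$ is a planar rooted tree with internal nodes decorated by elements of $\mathfrak{G}_\mathcal{O}$ (arity matching) evaluating to $x$ in $\mathcal{O}$. $\mathcal{O}$ is homogeneous if $\mathcal{O}(0)=\emptyset$, $\mathcal{O}(1)=\{\mathbf{1}\}$, and all treelike expressions of any given element have the same number of internal nodes (its degree); it is finitely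 generated if $\mathfrak{G}_\mathcal{O}$ is finite. The prefix poset of $\mathcal{O}$ is $\mathcal{O}$ ordered by $x\preceq y$ iff $y=(\cdots((x\circ_{i_1}\mathtt{a}_1)\circ_{i_2}\mathtt{a}_2)\cdots)\circ_{i_k}\mathtt{a}_k$ for some $k\ge0$, $\mathtt{a}_j\in\mathfrak{G}_\mathcal{O}$ and positive integers $i_j$. *)

theory Defs
  imports Main
begin

record 'a operad =
  carrier :: "'a set"
  arity :: "'a \<Rightarrow> nat"
  pcomp :: "'a \<Rightarrow> nat \<Rightarrow> 'a \<Rightarrow> 'a"
  op_unit :: 'a

definition ns_operad :: "('a, 'b) operad_scheme \<Rightarrow> bool" where
  "ns_operad Op \<longleftrightarrow>
     (\<forall>x\<in>carrier Op. \<forall>y\<in>carrier Op. \<forall>i. 1 \<le> i \<and> i \<le> arity Op x \<longrightarrow>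
        pcomp Op x i y \<in> carrier Op \<and> arity Op (pcomp Op x i y) = arity Op x + arity Op y - 1)
   \<and> op_unit Op \<in> carrier Op \<and> arity Op (op_unit Op) = 1
   \<and> (\<forall>x\<in>carrier Op. pcomp Op (op_unit Op) 1 x = x)
   \<and> (\<forall>x\<in>carrier Op. \<forall>i. 1 \<le> i \<and> i \<le> arity Op x \<longrightarrow> pcomp Op x i (op_unit Op) = x)
   \<and> (\<forall>x\<in>carrier Op. \<forall>y\<in>carrier Op. \<forall>z\<in>carrier Op. \<forall>i j.
        1 \<le> i \<and> i \<le> arity Op x \<and> 1 \<le> j \<and> j \<le> arity Op y \<longrightarrow>
        pcomp Op (pcomp Op x i y) (i + j - 1) z = pcomp Op x i (pcomp Op y j z))
   \<and> (\<forall>x\<in>carrier Op. \<forall>y\<in>carrier Op. \<forall>z\<in>carrier Op. \<forall>i j.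
        1 \<le> i \<and> i < j \<and> j \<le> arity Op x \<longrightarrow>
        pcomp Op (pcomp Op x i y) (j + arity Op y - 1) z = pcomp Op (pcomp Op x j z) i y)"

(* full composition x \<circ> [z_1,...,z_n] = (...((x \<circ>_n z_n) \<circ>_{n-1} z_{n-1})...) \<circ>_1 z_1 *)
definition fcomp :: "('a, 'b) operad_scheme \<Rightarrow> 'a \<Rightarrow> 'a list \<Rightarrow> 'a" where
  "fcomp Op x zs = foldl (\<lambda>acc (i, z). pcomp Op acc i z) x (rev (zip [1..<length zs + 1] zs))"

inductive_set generated :: "('a, 'b) operad_scheme \<Rightarrow> 'a set \<Rightarrow> 'a set"
  for Op G where
  gen_unit: "op_unit Op \<in> generated Op G"
| gen_base: "g \<in> G \<Longrightarrow> g \<in> generated Op G"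
| gen_comp: "x \<in> generated Op G \<Longrightarrow> y \<in> generated Op G \<Longrightarrow> 1 \<le> i \<Longrightarrow> i \<le> arity Op x
     \<Longrightarrow> pcomp Op x i y \<in> generated Op G"

definition generating_set :: "('a, 'b) operad_scheme \<Rightarrow> 'a set \<Rightarrow> bool" where
  "generating_set Op G \<longleftrightarrow> G \<subseteq> carrier Op \<and> generated Op G = carrier Op"

definition minimal_generating_set :: "('a, 'b) operad_scheme \<Rightarrow> 'a set \<Rightarrow> bool" where
  "minimal_generating_set Op G \<longleftrightarrow> generating_set Op G \<and> (\<forall>H. H \<subset> G \<longrightarrow> \<not> generating_set Op H)"

definition gens :: "('a, 'b) operad_scheme \<Rightarrow> 'a set" where
  "gens Op = (THE G. minimal_generating_set Op G)"

datatype 'a ptree = Leaf | Node 'a "'a ptree list"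

fun eval_tree :: "('a, 'b) operad_scheme \<Rightarrow> 'a ptree \<Rightarrow> 'a" where
  "eval_tree Op Leaf = op_unit Op"
| "eval_tree Op (Node g ts) = fcomp Op g (map (eval_tree Op) ts)"

fun internal_nodes :: "'a ptree \<Rightarrow> nat" where
  "internal_nodes Leaf = 0"
| "internal_nodes (Node g ts) = 1 + sum_list (map internal_nodes ts)"

fun wf_tree :: "('a, 'b) operad_scheme \<Rightarrow> 'a set \<Rightarrow> 'a ptree \<Rightarrow> bool" where
  "wf_tree Op G Leaf = True"
| "wf_tree Op G (Node g ts) = (g \<in> G \<and> length ts = arity Op g \<and> (\<forall>t\<in>set ts. wf_tree Op G t))"

definition treelike_expr :: "('a, 'b) operad_scheme \<Rightarrow> 'a ptree \<Rightarrow> 'a \<Rightarrow> bool" where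
  "treelike_expr Op t x \<longleftrightarrow> wf_tree Op (gens Op) t \<and> eval_tree Op t = x"

definition homogeneous :: "('a, 'b) operad_scheme \<Rightarrow> bool" where
  "homogeneous Op \<longleftrightarrow>
     {x \<in> carrier Op. arity Op x = 0} = {}
   \<and> {x \<in> carrier Op. arity Op x = 1} = {op_unit Op}
   \<and> (\<forall>x\<in>carrier Op. \<forall>t1 t2. treelike_expr Op t1 x \<and> treelike_expr Op t2 x
          \<longrightarrow> internal_nodes t1 = internal_nodes t2)"

definition finitely_generated :: "('a, 'b) operad_scheme \<Rightarrow> bool" where
  "finitely_generated Op \<longleftrightarrow> finite (gens Op)"

inductive prefix_le :: "('a, 'b) operad_scheme \<Rightarrow> 'a \<Rightarrow> 'a \<Rightarrow> bool" for Op where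
  prefix_refl: "x \<in> carrier Op \<Longrightarrow> prefix_le Op x x"
| prefix_step: "prefix_le Op x y \<Longrightarrow> a \<in> gens Op \<Longrightarrow> 1 \<le> i \<Longrightarrow> i \<le> arity Op y
     \<Longrightarrow> prefix_le Op x (pcomp Op y i a)"

definition prefix_covers :: "('a, 'b) operad_scheme \<Rightarrow> 'a \<Rightarrow> 'a \<Rightarrow> bool" where
  "prefix_covers Op x y \<longleftrightarrow> prefix_le Op x y \<and> x \<noteq> y \<and>
     \<not> (\<exists>z. prefix_le Op x z \<and> x \<noteq> z \<and> prefix_le Op z y \<and> z \<noteq> y)"

end

theory Submission
  imports Defs
begin

text \<open>
  In an operad with no nullary elements and the unit as only unary element, the minimal
  generating set is the set of indecomposable elements. Every input of
  \<open>x \<circ> [z\<^sub>1, \<dots>, z\<^sub>n]\<close> is an input of some \<open>z\<^sub>j\<close>, so by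
  associativity and commutativity a composition \<open>\<circ>\<^sub>i a\<close> on the right can be pushed into
  one of the \<open>z\<^sub>j\<close>; hence the elements of the form \<open>x \<circ> [z\<^sub>1, \<dots>, z\<^sub>n]\<close> are
  closed under the steps of the prefix order. Conversely, writing each \<open>z\<^sub>j\<close> as a composite
  of generators exhibits \<open>x \<circ> [z\<^sub>1, \<dots>, z\<^sub>n]\<close> as an iterated composition of \<open>x\<close>
  with generators. For covers, homogeneity provides a degree that grows by exactly one under
  \<open>\<circ>\<^sub>i a\<close> with \<open>a\<close> a generator, and hence strictly along the prefix order, so nothing
  lies strictly between \<open>x\<close> and \<open>x \<circ>\<^sub>i a\<close>.
\<close>

definition fcomp_from :: "('a, 'b) operad_scheme \<Rightarrow> nat \<Rightarrow> 'a \<Rightarrow> 'a list \<Rightarrow> 'a" where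
  "fcomp_from Op k x zs = foldl (\<lambda>acc (i, z). pcomp Op acc i z) x (rev (zip [k..<k + length zs] zs))"

lemma fcomp_from_Nil [simp]: "fcomp_from Op k x [] = x"
  by (simp add: fcomp_from_def)

lemma fcomp_from_Cons [simp]:
  "fcomp_from Op k x (z # zs) = pcomp Op (fcomp_from Op (Suc k) x zs) k z"
  by (simp add: fcomp_from_def upt_conv_Cons del: upt_Suc)

lemma fcomp_eq_fcomp_from: "fcomp Op x zs = fcomp_from Op 1 x zs"
  by (simp add: fcomp_def fcomp_from_def add.commute)

lemma prefix_le_trans: "prefix_le Op y z \<Longrightarrow> prefix_le Op x y \<Longrightarrow> prefix_le Op x z"
  by (induction rule: prefix_le.induct) (auto intro: prefix_le.intros)

locale nonsymmetric_operad =
  fixes Op :: "('a, 'b) operad_scheme"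
  assumes ns_operad: "ns_operad Op"
begin

lemma pcomp_closed:
  "x \<in> carrier Op \<Longrightarrow> y \<in> carrier Op \<Longrightarrow> 1 \<le> i \<Longrightarrow> i \<le> arity Op x \<Longrightarrow> pcomp Op x i y \<in> carrier Op"
  using ns_operad unfolding ns_operad_def by blast

lemma arity_pcomp:
  "x \<in> carrier Op \<Longrightarrow> y \<in> carrier Op \<Longrightarrow> 1 \<le> i \<Longrightarrow> i \<le> arity Op x \<Longrightarrow>
   arity Op (pcomp Op x i y) = arity Op x + arity Op y - 1"
  using ns_operad unfolding ns_operad_def by blast

lemma unit_closed: "op_unit Op \<in> carrier Op"
  using ns_operad unfolding ns_operad_def by blast

lemma arity_unit: "arity Op (op_unit Op) = 1"
  using ns_operad unfolding ns_operad_def by blast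

lemma pcomp_unit_left: "x \<in> carrier Op \<Longrightarrow> pcomp Op (op_unit Op) 1 x = x"
  using ns_operad unfolding ns_operad_def by blast

lemma pcomp_unit_right:
  "x \<in> carrier Op \<Longrightarrow> 1 \<le> i \<Longrightarrow> i \<le> arity Op x \<Longrightarrow> pcomp Op x i (op_unit Op) = x"
  using ns_operad unfolding ns_operad_def by blast

lemma pcomp_assoc:
  "x \<in> carrier Op \<Longrightarrow> y \<in> carrier Op \<Longrightarrow> z \<in> carrier Op \<Longrightarrow> 1 \<le> i \<Longrightarrow> i \<le> arity Op x \<Longrightarrow>
   1 \<le> j \<Longrightarrow> j \<le> arity Op y \<Longrightarrow>
   pcomp Op (pcomp Op x i y) (i + j - 1) z = pcomp Op x i (pcomp Op y j z)"
  using ns_operad unfolding ns_operad_def by blast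

lemma pcomp_comm:
  "x \<in> carrier Op \<Longrightarrow> y \<in> carrier Op \<Longrightarrow> z \<in> carrier Op \<Longrightarrow> 1 \<le> i \<Longrightarrow> i < j \<Longrightarrow> j \<le> arity Op x \<Longrightarrow>
   pcomp Op (pcomp Op x i y) (j + arity Op y - 1) z = pcomp Op (pcomp Op x j z) i y"
  using ns_operad unfolding ns_operad_def by blast

lemma fcomp_from_closed:
  assumes "1 \<le> k" "k + length zs = arity Op x + 1" "x \<in> carrier Op" "set zs \<subseteq> carrier Op"
  shows "fcomp_from Op k x zs \<in> carrier Op \<and> k \<le> arity Op (fcomp_from Op k x zs) + 1"
  using assms
proof (induction zs arbitrary: k)
  case Nil
  then show ?case by simp
next
  case (Cons z zs)
  let ?w = "fcomp_from Op (Suc k) x zs"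
  have "?w \<in> carrier Op" "k \<le> arity Op ?w"
    using Cons.IH[of "Suc k"] Cons.prems by auto
  then show ?case
    using Cons.prems pcomp_closed arity_pcomp by auto
qed

lemma fcomp_from_units:
  "1 \<le> k \<Longrightarrow> k + m = arity Op x + 1 \<Longrightarrow> x \<in> carrier Op \<Longrightarrow>
   fcomp_from Op k x (replicate m (op_unit Op)) = x"
  by (induction m arbitrary: k) (auto simp: pcomp_unit_right)

lemma pcomp_fcomp_from_into_argument:
  assumes "1 \<le> k" "k + length zs = arity Op x + 1" "x \<in> carrier Op" "set zs \<subseteq> carrier Op"
    and "a \<in> carrier Op" "k \<le> p" "p \<le> arity Op (fcomp_from Op k x zs)"
  shows "\<exists>j r. j < length zs \<and> 1 \<le> r \<and> r \<le> arity Op (zs ! j) \<and>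
           pcomp Op (fcomp_from Op k x zs) p a = fcomp_from Op k x (zs[j := pcomp Op (zs ! j) r a])"
  using assms
proof (induction zs arbitrary: k p)
  case Nil
  then show ?case by simp
next
  case (Cons z zs)
  let ?w = "fcomp_from Op (Suc k) x zs"
  have z: "z \<in> carrier Op" and w: "?w \<in> carrier Op" "k \<le> arity Op ?w"
    using Cons.prems fcomp_from_closed[of "Suc k" zs x] by auto
  have arity_eq: "arity Op (fcomp_from Op k x (z # zs)) = arity Op ?w + arity Op z - 1"
    using arity_pcomp[OF w(1) z \<open>1 \<le> k\<close> w(2)] by simp
  show ?case
  proof (cases "p < k + arity Op z")
    case True
    define r where "r = p + 1 - k"
    have r: "1 \<le> r" "r \<le> arity Op z" "k + r - 1 = p"
      using True \<open>k \<le> p\<close> by (auto simp: r_def)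
    have "pcomp Op (fcomp_from Op k x (z # zs)) p a = fcomp_from Op k x ((z # zs)[0 := pcomp Op z r a])"
      using pcomp_assoc[OF w(1) z \<open>a \<in> carrier Op\<close> \<open>1 \<le> k\<close> w(2) r(1,2)] r(3) by simp
    then show ?thesis
      using r by fastforce
  next
    case False
    define q where "q = p + 1 - arity Op z"
    have q: "Suc k \<le> q" "q \<le> arity Op ?w" "q + arity Op z - 1 = p"
      using False Cons.prems(1,7) arity_eq w(2) by (auto simp: q_def)
    have "pcomp Op (fcomp_from Op k x (z # zs)) p a = pcomp Op (pcomp Op ?w q a) k z"
      using pcomp_comm[OF w(1) z \<open>a \<in> carrier Op\<close> \<open>1 \<le> k\<close> _ q(2)] q by simp
    moreover obtain j r where "j < length zs" "1 \<le> r" "r \<le> arity Op (zs ! j)"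
      "pcomp Op ?w q a = fcomp_from Op (Suc k) x (zs[j := pcomp Op (zs ! j) r a])"
      using Cons.IH[of "Suc k" q] Cons.prems q by auto
    ultimately show ?thesis
      by (intro exI[of _ "Suc j"] exI[of _ r]) auto
  qed
qed


lemma fcomp_closed:
  "length zs = arity Op x \<Longrightarrow> x \<in> carrier Op \<Longrightarrow> set zs \<subseteq> carrier Op \<Longrightarrow> fcomp Op x zs \<in> carrier Op"
  using fcomp_from_closed[of 1 zs x] by (simp add: fcomp_eq_fcomp_from)

lemma fcomp_units: "x \<in> carrier Op \<Longrightarrow> fcomp Op x (replicate (arity Op x) (op_unit Op)) = x"
  using fcomp_from_units[of 1 "arity Op x" x] by (simp add: fcomp_eq_fcomp_from)

lemma pcomp_fcomp_into_argument:
  assumes "length zs = arity Op x" "x \<in> carrier Op" "set zs \<subseteq> carrier Op" "a \<in> carrier Op"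
    and "1 \<le> p" "p \<le> arity Op (fcomp Op x zs)"
  shows "\<exists>j r. j < length zs \<and> 1 \<le> r \<and> r \<le> arity Op (zs ! j) \<and>
           pcomp Op (fcomp Op x zs) p a = fcomp Op x (zs[j := pcomp Op (zs ! j) r a])"
  using pcomp_fcomp_from_into_argument[of 1 zs x a p] assms by (simp add: fcomp_eq_fcomp_from)

lemma generated_subset_carrier: "G \<subseteq> carrier Op \<Longrightarrow> generated Op G \<subseteq> carrier Op"
proof
  fix x
  assume G: "G \<subseteq> carrier Op" and x: "x \<in> generated Op G"
  from x show "x \<in> carrier Op"
    by (induction rule: generated.induct) (use G in \<open>auto simp: unit_closed pcomp_closed\<close>)
qed

definition indecomposables :: "'a set" where
  "indecomposables = {x \<in> carrier Op. x \<noteq> op_unit Op \<and>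
     (\<forall>y\<in>carrier Op. \<forall>z\<in>carrier Op. \<forall>i. 1 \<le> i \<and> i \<le> arity Op y \<and> x = pcomp Op y i z
        \<longrightarrow> y = op_unit Op \<or> z = op_unit Op)}"

lemma indecomposables_subset_generating_set:
  assumes "generating_set Op G"
  shows "indecomposables \<subseteq> G"
proof
  fix x
  assume x: "x \<in> indecomposables"
  have G: "G \<subseteq> carrier Op" "generated Op G = carrier Op"
    using assms unfolding generating_set_def by auto
  have "x \<in> generated Op G"
    using x G(2) unfolding indecomposables_def by blast
  then show "x \<in> G"
    using x
  proof (induction rule: generated.induct)
    case gen_unit
    then show ?case unfolding indecomposables_def by blast
  next
    case (gen_base g)
    then show ?case by blast
  next
    case (gen_comp u v i)
    have u: "u \<in> carrier Op" and v: "v \<in> carrier Op"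
      using gen_comp.hyps generated_subset_carrier[OF G(1)] by auto
    consider "u = op_unit Op" | "v = op_unit Op" | "u \<noteq> op_unit Op" "v \<noteq> op_unit Op"
      by blast
    then show ?case
    proof cases
      case 1
      then show ?thesis using gen_comp arity_unit pcomp_unit_left[OF v] by simp
    next
      case 2
      then show ?thesis using gen_comp pcomp_unit_right[OF u] by simp
    next
      case 3
      then show ?thesis using gen_comp u v unfolding indecomposables_def by blast
    qed
  qed
qed

end

locale connected_operad = nonsymmetric_operad +
  assumes arity_nonzero: "x \<in> carrier Op \<Longrightarrow> arity Op x \<noteq> 0"
    and arity_eq_1_unit: "x \<in> carrier Op \<Longrightarrow> arity Op x = 1 \<Longrightarrow> x = op_unit Op"
begin

lemma arity_ge_2: "x \<in> carrier Op \<Longrightarrow> x \<noteq> op_unit Op \<Longrightarrow> 2 \<le> arity Op x"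
  using arity_nonzero arity_eq_1_unit by fastforce

lemma generating_set_indecomposables: "generating_set Op indecomposables"
proof -
  have "x \<in> generated Op indecomposables" if "x \<in> carrier Op" for x
    using that
  proof (induction "arity Op x" arbitrary: x rule: less_induct)
    case less
    show ?case
    proof (cases "x \<in> indecomposables \<or> x = op_unit Op")
      case True
      then show ?thesis by (auto intro: generated.intros)
    next
      case False
      then obtain y z i where yz: "y \<in> carrier Op" "z \<in> carrier Op" "y \<noteq> op_unit Op" "z \<noteq> op_unit Op"
        "1 \<le> i" "i \<le> arity Op y" "x = pcomp Op y i z"
        using less.prems unfolding indecomposables_def by blast
      have "arity Op y < arity Op x" "arity Op z < arity Op x"
        using arity_pcomp[OF yz(1,2,5,6)] arity_ge_2[OF yz(1,3)] arity_ge_2[OF yz(2,4)] yz(7) by auto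
      then show ?thesis
        using less yz generated.gen_comp by metis
    qed
  qed
  moreover have "indecomposables \<subseteq> carrier Op"
    unfolding indecomposables_def by blast
  ultimately show ?thesis
    unfolding generating_set_def using generated_subset_carrier by blast
qed

lemma gens_eq_indecomposables: "gens Op = indecomposables"
  unfolding gens_def
proof (rule the_equality)
  show "minimal_generating_set Op indecomposables"
    unfolding minimal_generating_set_def
    using generating_set_indecomposables indecomposables_subset_generating_set by blast
next
  fix G
  assume "minimal_generating_set Op G"
  then show "G = indecomposables"
    unfolding minimal_generating_set_def
    using generating_set_indecomposables indecomposables_subset_generating_set by blast
qed

lemma gens_subset_carrier: "gens Op \<subseteq> carrier Op"
  using gens_eq_indecomposables unfolding indecomposables_def by blast

lemma generated_gens: "generated Op (gens Op) = carrier Op"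
  using generating_set_indecomposables gens_eq_indecomposables unfolding generating_set_def by simp

lemma arity_gens: "a \<in> gens Op \<Longrightarrow> 2 \<le> arity Op a"
  using gens_eq_indecomposables arity_ge_2 unfolding indecomposables_def by blast

lemma pcomp_gens_neq:
  assumes "x \<in> carrier Op" "a \<in> gens Op" "1 \<le> i" "i \<le> arity Op x"
  shows "pcomp Op x i a \<noteq> x"
proof
  assume "pcomp Op x i a = x"
  then have "arity Op x = arity Op x + arity Op a - 1"
    using arity_pcomp[OF assms(1) _ assms(3,4), of a] assms(2) gens_subset_carrier by auto
  then show False
    using arity_gens[OF assms(2)] by simp
qed

lemma prefix_le_carrier: "prefix_le Op x y \<Longrightarrow> x \<in> carrier Op \<and> y \<in> carrier Op"
  by (induction rule: prefix_le.induct) (use gens_subset_carrier in \<open>auto simp: pcomp_closed\<close>)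

lemma prefix_le_pcomp:
  assumes "z \<in> carrier Op" "x \<in> carrier Op" "1 \<le> i" "i \<le> arity Op x"
  shows "prefix_le Op x (pcomp Op x i z)"
proof -
  have "z \<in> generated Op (gens Op)"
    using assms(1) generated_gens by simp
  then show ?thesis
    using assms(2-4)
  proof (induction arbitrary: x i rule: generated.induct)
    case gen_unit
    then show ?case by (simp add: pcomp_unit_right prefix_refl)
  next
    case (gen_base g)
    then show ?case by (metis prefix_refl prefix_step)
  next
    case (gen_comp u v j)
    have u: "u \<in> carrier Op" and v: "v \<in> carrier Op"
      using gen_comp.hyps generated_gens by auto
    have xu: "pcomp Op x i u \<in> carrier Op" "arity Op (pcomp Op x i u) = arity Op x + arity Op u - 1"
      using pcomp_closed arity_pcomp u gen_comp.prems by auto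
    have "prefix_le Op x (pcomp Op x i u)"
      using gen_comp by blast
    moreover have "prefix_le Op (pcomp Op x i u) (pcomp Op (pcomp Op x i u) (i + j - 1) v)"
      using gen_comp.IH(2)[OF xu(1)] xu(2) gen_comp.hyps gen_comp.prems by auto
    moreover have "pcomp Op (pcomp Op x i u) (i + j - 1) v = pcomp Op x i (pcomp Op u j v)"
      using pcomp_assoc[OF gen_comp.prems(1) u v gen_comp.prems(2,3) gen_comp.hyps(3,4)] .
    ultimately show ?case
      using prefix_le_trans by metis
  qed
qed

lemma prefix_le_fcomp_from:
  assumes "1 \<le> k" "k + length zs = arity Op x + 1" "x \<in> carrier Op" "set zs \<subseteq> carrier Op"
  shows "prefix_le Op x (fcomp_from Op k x zs)"
  using assms
proof (induction zs arbitrary: k)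
  case Nil
  then show ?case by (simp add: prefix_refl)
next
  case (Cons z zs)
  let ?w = "fcomp_from Op (Suc k) x zs"
  have "?w \<in> carrier Op" "k \<le> arity Op ?w"
    using fcomp_from_closed[of "Suc k" zs x] Cons.prems by auto
  then have "prefix_le Op ?w (pcomp Op ?w k z)"
    using prefix_le_pcomp Cons.prems by auto
  moreover have "prefix_le Op x ?w"
    using Cons.IH[of "Suc k"] Cons.prems by auto
  ultimately show ?case
    using prefix_le_trans by simp
qed

lemma prefix_le_iff_fcomp:
  assumes "x \<in> carrier Op"
  shows "prefix_le Op x y \<longleftrightarrow> (\<exists>zs. length zs = arity Op x \<and> set zs \<subseteq> carrier Op \<and> y = fcomp Op x zs)"
proof
  assume "prefix_le Op x y"
  then show "\<exists>zs. length zs = arity Op x \<and> set zs \<subseteq> carrier Op \<and> y = fcomp Op x zs"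
  proof (induction rule: prefix_le.induct)
    case (prefix_refl x)
    then show ?case
      by (intro exI[of _ "replicate (arity Op x) (op_unit Op)"]) (auto simp: fcomp_units unit_closed)
  next
    case (prefix_step x y a i)
    then obtain zs where zs: "length zs = arity Op x" "set zs \<subseteq> carrier Op" "y = fcomp Op x zs"
      by blast
    have x: "x \<in> carrier Op" and a: "a \<in> carrier Op"
      using prefix_step prefix_le_carrier gens_subset_carrier by auto
    have "1 \<le> i" "i \<le> arity Op (fcomp Op x zs)"
      using prefix_step zs(3) by auto
    then obtain j r where jr: "j < length zs" "1 \<le> r" "r \<le> arity Op (zs ! j)"
      "pcomp Op (fcomp Op x zs) i a = fcomp Op x (zs[j := pcomp Op (zs ! j) r a])"
      using pcomp_fcomp_into_argument[OF zs(1) x zs(2) a] by blast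
    have "pcomp Op (zs ! j) r a \<in> carrier Op"
      using jr zs(2) a by (intro pcomp_closed) auto
    then have "set (zs[j := pcomp Op (zs ! j) r a]) \<subseteq> carrier Op"
      using zs(2) set_update_subset_insert by fastforce
    then show ?case
      using jr zs(1,3) by (intro exI[of _ "zs[j := pcomp Op (zs ! j) r a]"]) auto
  qed
next
  assume "\<exists>zs. length zs = arity Op x \<and> set zs \<subseteq> carrier Op \<and> y = fcomp Op x zs"
  then show "prefix_le Op x y"
    using prefix_le_fcomp_from[of 1 _ x] assms by (auto simp: fcomp_eq_fcomp_from)
qed

lemma prefix_covers_pcomp_gens:
  assumes "prefix_covers Op x y"
  shows "\<exists>a\<in>gens Op. \<exists>i. 1 \<le> i \<and> i \<le> arity Op x \<and> y = pcomp Op x i a"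
proof -
  have le: "prefix_le Op x y" and "x \<noteq> y"
    and nothing_between: "\<not> (\<exists>z. prefix_le Op x z \<and> x \<noteq> z \<and> prefix_le Op z y \<and> z \<noteq> y)"
    using assms unfolding prefix_covers_def by auto
  from le show ?thesis
  proof cases
    case prefix_refl
    with \<open>x \<noteq> y\<close> show ?thesis by simp
  next
    case (prefix_step y' a i)
    have "y' \<in> carrier Op"
      using prefix_step(2) prefix_le_carrier by blast
    then have "y' \<noteq> y" "prefix_le Op y' y"
      using pcomp_gens_neq[of y' a i] prefix_step by (auto intro: prefix_le.intros)
    with nothing_between prefix_step(2) have "x = y'"
      by blast
    with prefix_step show ?thesis
      by blast
  qed
qed

lemma eval_tree_closed: "wf_tree Op (gens Op) t \<Longrightarrow> eval_tree Op t \<in> carrier Op"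
proof (induction t)
  case Leaf
  then show ?case by (simp add: unit_closed)
next
  case (Node g ts)
  then show ?case
    using gens_subset_carrier by (auto intro!: fcomp_closed)
qed


lemma treelike_expr_pcomp_gens:
  assumes "treelike_expr Op t x" "a \<in> gens Op" "1 \<le> i" "i \<le> arity Op x"
  shows "\<exists>t'. treelike_expr Op t' (pcomp Op x i a) \<and> internal_nodes t' = internal_nodes t + 1"
  using assms unfolding treelike_expr_def
proof (induction t arbitrary: x i)
  case Leaf
  have a: "a \<in> carrier Op"
    using Leaf.prems gens_subset_carrier by auto
  let ?t = "Node a (replicate (arity Op a) Leaf)"
  have "eval_tree Op ?t = pcomp Op x i a"
    using Leaf.prems arity_unit fcomp_units[OF a] pcomp_unit_left[OF a] by simp
  moreover have "wf_tree Op (gens Op) ?t" "internal_nodes ?t = internal_nodes Leaf + 1"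
    using Leaf.prems by (simp_all add: sum_list_replicate)
  ultimately show ?case
    by blast
next
  case (Node g ts)
  let ?ys = "map (eval_tree Op) ts"
  have g: "g \<in> carrier Op" "length ?ys = arity Op g" and ys: "set ?ys \<subseteq> carrier Op"
    using Node.prems gens_subset_carrier eval_tree_closed by auto
  have a: "a \<in> carrier Op"
    using Node.prems gens_subset_carrier by auto
  obtain j r where jr: "j < length ts" "1 \<le> r" "r \<le> arity Op (eval_tree Op (ts ! j))"
    "pcomp Op (fcomp Op g ?ys) i a = fcomp Op g (?ys[j := pcomp Op (eval_tree Op (ts ! j)) r a])"
    using pcomp_fcomp_into_argument[OF g(2,1) ys a, of i] Node.prems by auto
  then obtain t'' where t'': "wf_tree Op (gens Op) t''"
    "eval_tree Op t'' = pcomp Op (eval_tree Op (ts ! j)) r a"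
    "internal_nodes t'' = internal_nodes (ts ! j) + 1"
    using Node.IH[OF nth_mem[OF jr(1)], of "eval_tree Op (ts ! j)" r] Node.prems jr by auto
  let ?t = "Node g (ts[j := t''])"
  have "wf_tree Op (gens Op) ?t"
    using Node.prems t''(1) by (auto dest: set_update_subset_insert[THEN subsetD])
  moreover have "eval_tree Op ?t = pcomp Op x i a"
    using jr t''(2) Node.prems by (simp add: map_update)
  moreover have "internal_nodes ?t = internal_nodes (Node g ts) + 1"
    using jr(1) t''(3) by (simp add: map_update sum_list_update)
  ultimately show ?case
    by blast
qed

lemma treelike_expr_prefix_le:
  assumes "prefix_le Op x y" "treelike_expr Op t x"
  shows "\<exists>t'. treelike_expr Op t' y"
  using assms
proof (induction rule: prefix_le.induct)
  case (prefix_refl x)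
  then show ?case by blast
next
  case (prefix_step x y a i)
  then obtain t' where "treelike_expr Op t' y"
    by blast
  then show ?case
    using treelike_expr_pcomp_gens prefix_step.hyps by blast
qed

lemma treelike_expr_exists:
  assumes "x \<in> carrier Op"
  shows "\<exists>t. treelike_expr Op t x"
proof -
  have "prefix_le Op (op_unit Op) x"
    using prefix_le_pcomp[OF assms unit_closed] arity_unit pcomp_unit_left[OF assms] by simp
  moreover have "treelike_expr Op Leaf (op_unit Op)"
    unfolding treelike_expr_def by simp
  ultimately show ?thesis
    using treelike_expr_prefix_le by blast
qed

end

locale homogeneous_operad = nonsymmetric_operad +
  assumes homogeneous: "homogeneous Op"

sublocale homogeneous_operad \<subseteq> connected_operad
proof
  have "{x \<in> carrier Op. arity Op x = 0} = {}" "{x \<in> carrier Op. arity Op x = 1} = {op_unit Op}"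
    using homogeneous unfolding homogeneous_def by simp_all
  then show "x \<in> carrier Op \<Longrightarrow> arity Op x \<noteq> 0" "x \<in> carrier Op \<Longrightarrow> arity Op x = 1 \<Longrightarrow> x = op_unit Op"
    for x by auto
qed

context homogeneous_operad
begin

definition degree :: "'a \<Rightarrow> nat" where
  "degree x = internal_nodes (SOME t. treelike_expr Op t x)"

lemma degree_eq_internal_nodes:
  assumes "treelike_expr Op t x"
  shows "degree x = internal_nodes t"
proof -
  have "x \<in> carrier Op"
    using assms eval_tree_closed unfolding treelike_expr_def by blast
  moreover have "treelike_expr Op (SOME t. treelike_expr Op t x) x"
    using assms by (rule someI)
  ultimately show ?thesis
    using homogeneous assms unfolding homogeneous_def degree_def by blast
qed

lemma degree_pcomp_gens:
  assumes "x \<in> carrier Op" "a \<in> gens Op" "1 \<le> i" "i \<le> arity Op x"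
  shows "degree (pcomp Op x i a) = degree x + 1"
proof -
  obtain t where t: "treelike_expr Op t x"
    using treelike_expr_exists[OF assms(1)] by blast
  then obtain t' where "treelike_expr Op t' (pcomp Op x i a)" "internal_nodes t' = internal_nodes t + 1"
    using treelike_expr_pcomp_gens assms(2-4) by blast
  then show ?thesis
    using t degree_eq_internal_nodes by simp
qed

lemma prefix_le_degree_less: "prefix_le Op x y \<Longrightarrow> x = y \<or> degree x < degree y"
proof (induction rule: prefix_le.induct)
  case (prefix_refl x)
  then show ?case by simp
next
  case (prefix_step x y a i)
  have "y \<in> carrier Op"
    using prefix_step.hyps(1) prefix_le_carrier by blast
  then have "degree (pcomp Op y i a) = degree y + 1"
    using degree_pcomp_gens prefix_step.hyps by blast
  then show ?case
    using prefix_step.IH by auto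
qed

lemma prefix_covers_iff_pcomp_gens:
  assumes "x \<in> carrier Op"
  shows "prefix_covers Op x y \<longleftrightarrow> (\<exists>a\<in>gens Op. \<exists>i. 1 \<le> i \<and> i \<le> arity Op x \<and> y = pcomp Op x i a)"
proof
  assume "prefix_covers Op x y"
  then show "\<exists>a\<in>gens Op. \<exists>i. 1 \<le> i \<and> i \<le> arity Op x \<and> y = pcomp Op x i a"
    by (rule prefix_covers_pcomp_gens)
next
  assume "\<exists>a\<in>gens Op. \<exists>i. 1 \<le> i \<and> i \<le> arity Op x \<and> y = pcomp Op x i a"
  then obtain a i where a: "a \<in> gens Op" and i: "1 \<le> i" "i \<le> arity Op x" and y: "y = pcomp Op x i a"
    by blast
  have degree_y: "degree y = degree x + 1"
    using degree_pcomp_gens[OF assms a i] y by simp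
  have "prefix_le Op x y"
    using y a i assms by (auto intro: prefix_le.intros)
  moreover have "x \<noteq> y"
    using pcomp_gens_neq[OF assms a i] y by simp
  moreover have "\<not> (\<exists>z. prefix_le Op x z \<and> x \<noteq> z \<and> prefix_le Op z y \<and> z \<noteq> y)"
  proof
    assume "\<exists>z. prefix_le Op x z \<and> x \<noteq> z \<and> prefix_le Op z y \<and> z \<noteq> y"
    then obtain z where "degree x < degree z" "degree z < degree y"
      using prefix_le_degree_less by blast
    with degree_y show False
      by simp
  qed
  ultimately show "prefix_covers Op x y"
    unfolding prefix_covers_def by blast
qed

end

theorem proposition4p5:
  fixes Op :: "('a, 'b) operad_scheme"
  assumes "ns_operad Op" and "homogeneous Op" and "finitely_generated Op"
  shows "(\<forall>x\<in>carrier Op. \<forall>y\<in>carrier Op.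
            prefix_le Op x y \<longleftrightarrow>
            (\<exists>zs. length zs = arity Op x \<and> set zs \<subseteq> carrier Op \<and> y = fcomp Op x zs))
       \<and> (\<forall>x\<in>carrier Op. \<forall>y\<in>carrier Op.
            prefix_covers Op x y \<longleftrightarrow>
            (\<exists>a\<in>gens Op. \<exists>i. 1 \<le> i \<and> i \<le> arity Op x \<and> y = pcomp Op x i a))"
proof -
  interpret homogeneous_operad Op
    using assms(1,2) by unfold_locales
  show ?thesis
    using prefix_le_iff_fcomp prefix_covers_iff_pcomp_gens by blast
qed

end
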